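(* Let $S$ be a reflective numerical semigroup with $\mathrm{g}(S)=g\ge1$ and $\mathrm{m}(S)=a$, and let $r\in\{1,\dots,a-1\}$ be the integer with $g\equiv r\pmod a$ (such $r$ exists since $a\nmid g$). Then $\mathrm{F}(S)=2g-r$.
   Context: A numerical semigroup is a submonoid $S$ of $(\mathbb{N}_0,+)$ with finite complement. Its set of gaps is $\mathrm{H}(S)=\mathbb{N}_0\setminus S$, its genus is $\mathrm{g}(S)=\#\mathrm{H}(S)$, its Frobenius number (when $\mathrm{g}(S)\ge1$) is $\mathrm{F}(S)=\max \mathrm{H}(S)$, and its multiplicity $\mathrm{m}(S)$ is the smallest positive element of $S$. A numerical semigroup $S$ of genus $g\ge1$ is called reflective if for every $z\in\{0,1,\dots,g-1\}$ exactly one of $z$ and $z+g$ belongs to $S$. *)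

theory Defs
  imports Main
begin

definition numerical_semigroup :: "nat set \<Rightarrow> bool" where
  "numerical_semigroup S \<longleftrightarrow> 0 \<in> S \<and> (\<forall>x\<in>S. \<forall>y\<in>S. x + y \<in> S) \<and> finite (UNIV - S)"

definition gaps :: "nat set \<Rightarrow> nat set" where
  "gaps S = UNIV - S"

definition genus :: "nat set \<Rightarrow> nat" where
  "genus S = card (gaps S)"

definition frobenius :: "nat set \<Rightarrow> nat" where
  "frobenius S = Max (gaps S)"

definition multiplicity_ns :: "nat set \<Rightarrow> nat" where
  "multiplicity_ns S = (LEAST x. x \<in> S \<and> 0 < x)"

definition reflective :: "nat set \<Rightarrow> bool" where
  "reflective S \<longleftrightarrow> genus S \<ge> 1 \<and>
     (\<forall>z < genus S. (z \<in> S \<and> z + genus S \<notin> S) \<or> (z \<notin> S \<and> z + genus S \<in> S))"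

end

theory Submission
  imports Defs
begin

(* Reflectivity at z = 0 puts g outside S, so the multiplicity a does not divide g; write
   g = q a + r with 0 < r < a. Reflectivity pairs each
   z < g with exactly one of z, z + g in S, so z \<mapsto> (z + g if z \<in> S, else z) maps {..<g}
   injectively onto the g gaps: every gap is below 2g. Since q a \<in> S and q a < g, the number
   q a + g = 2g - r is a gap. A gap y = 2g - r + j with 0 < j < r would force g + j \<notin> S
   (as q a \<in> S), hence j \<in> S by reflectivity, contradicting j < a. *)

lemma numerical_semigroup_mult_mem:
  assumes "numerical_semigroup S" "a \<in> S"
  shows "k * a \<in> S"
  using assms by (induction k) (auto simp: numerical_semigroup_def)

lemma numerical_semigroup_add_mult_mem:
  assumes "numerical_semigroup S" "a \<in> S" "x \<in> S"
  shows "x + k * a \<in> S"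
  using assms numerical_semigroup_mult_mem[OF assms(1,2)] by (auto simp: numerical_semigroup_def)

lemma multiplicity_ns_mem_pos:
  assumes "numerical_semigroup S"
  shows "multiplicity_ns S \<in> S \<and> 0 < multiplicity_ns S"
proof -
  have "finite (insert 0 (UNIV - S))"
    using assms by (simp add: numerical_semigroup_def)
  then have "\<exists>x. x \<notin> insert 0 (UNIV - S)"
    by (rule ex_new_if_finite[OF infinite_UNIV_nat])
  then obtain x where x: "x \<in> S" "0 < x"
    by blast
  show ?thesis
    unfolding multiplicity_ns_def by (rule LeastI[of _ x]) (simp add: x)
qed

lemma multiplicity_ns_le:
  assumes "y \<in> S" "0 < y"
  shows "multiplicity_ns S \<le> y"
  unfolding multiplicity_ns_def using assms by (intro Least_le) simp

lemma reflective_shift_mem_iff: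
  assumes "reflective S" "z < genus S"
  shows "z + genus S \<in> S \<longleftrightarrow> z \<notin> S"
  using assms unfolding reflective_def by blast

lemma reflective_genus_not_mem:
  assumes "numerical_semigroup S" "reflective S"
  shows "genus S \<notin> S"
proof -
  have "0 < genus S"
    using assms(2) by (simp add: reflective_def)
  moreover have "0 \<in> S"
    using assms(1) by (simp add: numerical_semigroup_def)
  ultimately show ?thesis
    using reflective_shift_mem_iff[OF assms(2), of 0] by simp
qed

lemma reflective_gap_less_twice_genus:
  assumes "numerical_semigroup S" "reflective S" "y \<notin> S"
  shows "y < 2 * genus S"
proof -
  define g where "g = genus S"
  define f where "f z = (if z \<in> S then z + g else z)" for z
  have shift: "\<And>z. z < g \<Longrightarrow> z + g \<in> S \<longleftrightarrow> z \<notin> S"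
    using reflective_shift_mem_iff[OF assms(2)] by (simp add: g_def)
  have fin: "finite (gaps S)"
    using assms(1) by (simp add: numerical_semigroup_def gaps_def)
  have sub: "f ` {..<g} \<subseteq> gaps S"
    using shift by (auto simp: f_def gaps_def)
  have "inj_on f {..<g}"
    unfolding inj_on_def f_def using shift by (auto split: if_splits)
  then have "card (f ` {..<g}) = card (gaps S)"
    by (simp add: card_image g_def genus_def)
  then have "f ` {..<g} = gaps S"
    using card_subset_eq[OF fin sub] by simp
  with assms(3) have "y \<in> f ` {..<g}"
    by (simp add: gaps_def)
  then show ?thesis
    by (auto simp: f_def g_def)
qed

lemma reflective_multiplicity_not_dvd_genus:
  assumes "numerical_semigroup S" "reflective S"
  shows "\<not> multiplicity_ns S dvd genus S"
proof
  assume "multiplicity_ns S dvd genus S"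
  then obtain k where "genus S = k * multiplicity_ns S"
    by (metis dvdE mult.commute)
  moreover have "k * multiplicity_ns S \<in> S"
    using numerical_semigroup_mult_mem[OF assms(1)] multiplicity_ns_mem_pos[OF assms(1)] by simp
  ultimately show False
    using reflective_genus_not_mem[OF assms] by simp
qed

lemma reflective_frobenius:
  assumes "numerical_semigroup S" "reflective S"
  shows "frobenius S = 2 * genus S - genus S mod multiplicity_ns S"
proof -
  define g where "g = genus S"
  define a where "a = multiplicity_ns S"
  define q where "q = g div a"
  define r where "r = g mod a"
  have shift: "\<And>z. z < g \<Longrightarrow> z + g \<in> S \<longleftrightarrow> z \<notin> S"
    using reflective_shift_mem_iff[OF assms(2)] by (simp add: g_def)
  have a: "a \<in> S" "0 < a"
    using multiplicity_ns_mem_pos[OF assms(1)] by (simp_all add: a_def)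
  have "r \<noteq> 0"
    using reflective_multiplicity_not_dvd_genus[OF assms] by (simp add: r_def a_def g_def mod_eq_0_iff_dvd)
  then have r: "0 < r" "r < a"
    using a by (simp_all add: r_def)
  have g: "g = q * a + r"
    by (simp add: q_def r_def)
  have qa: "q * a \<in> S"
    using numerical_semigroup_mult_mem[OF assms(1) a(1)] .
  have "q * a < g" "2 * g - r = q * a + g"
    using g r by simp_all
  then have gap: "2 * g - r \<notin> S"
    using shift[of "q * a"] qa by simp
  have above: "y \<le> 2 * g - r" if y: "y \<notin> S" for y
  proof (rule ccontr)
    assume "\<not> y \<le> 2 * g - r"
    then obtain j where j: "y = g + j + q * a" "0 < j" "j < r"
      using reflective_gap_less_twice_genus[OF assms y] g
      by (intro that[of "y - (g + q * a)"]) (simp_all add: g_def)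
    have "g + j \<notin> S"
      using numerical_semigroup_add_mult_mem[OF assms(1) a(1), of "g + j" q] j(1) y by blast
    moreover have "j < g"
      using j(3) g by simp
    ultimately have "j \<in> S"
      using shift[of j] by (simp add: add.commute)
    then have "a \<le> j"
      using multiplicity_ns_le j(2) by (simp add: a_def)
    then show False
      using j r by linarith
  qed
  have "frobenius S = 2 * g - r"
    unfolding frobenius_def
    by (rule Max_eqI) (use assms(1) above gap in \<open>auto simp: gaps_def numerical_semigroup_def\<close>)
  then show ?thesis
    by (simp add: g_def a_def r_def)
qed

theorem mainTheorem3:
  fixes S :: "nat set"
  assumes "numerical_semigroup S"
    and "reflective S"
  shows "\<not> multiplicity_ns S dvd genus S \<and>
    (\<forall>r::nat. 1 \<le> r \<and> r \<le> multiplicity_ns S - 1 \<and>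
       genus S mod multiplicity_ns S = r mod multiplicity_ns S
       \<longrightarrow> frobenius S = 2 * genus S - r)"
proof (intro conjI allI impI)
  show "\<not> multiplicity_ns S dvd genus S"
    using reflective_multiplicity_not_dvd_genus[OF assms] .
next
  fix r :: nat
  assume r: "1 \<le> r \<and> r \<le> multiplicity_ns S - 1 \<and>
    genus S mod multiplicity_ns S = r mod multiplicity_ns S"
  then have "r < multiplicity_ns S"
    using multiplicity_ns_mem_pos[OF assms(1)] by linarith
  with r have "r = genus S mod multiplicity_ns S"
    by simp
  then show "frobenius S = 2 * genus S - r"
    using reflective_frobenius[OF assms] by simp
qed

end
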